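(* In the setting of the context, the market $(S^0,S)$ admits strong $\rho$-arbitrage if and only if $\rho_1 < 0$, where $\rho_1 := \inf\{\rho(X_\pi) : \pi \in \mathbb{R}^d,\ \mathbb{E}[X_\pi] = 1\}$.
   Context: Let $(\Omega,\mathcal{F},\mathbb{P})$ be a probability space. The market consists of a riskless asset with $S^0_0 = 1$, $S^0_1 = 1+r$, $r > -1$, and $d$ risky assets $S^1,\dots,S^d$ with constants $S^i_0 > 0$ and real-valued $\mathcal{F}$-measurable $S^i_1$. Returns: $R^i := (S^i_1 - S^i_0)/S^i_0$, $R = (R^1,\dots,R^d)$. Standing assumptions: nonredundancy (if $\theta\in\mathbb{R}^{1+d}$ and $\sum_{i=0}^d \theta^i S^i_t = 0$ a.s. for $t\in\{0,1\}$ then $\theta=0$); $R^i \in L^1(\mathbb{P})$, $\mu^i := \mathbb{E}[R^i]$; $\mu^i \ne r$ for some $i$. Portfolio $\pi\in\mathbb{R}^d$ has excess return $X_\pi := \pi\cdot(R - r\mathbf{1})$. $L$ is a Riesz space with $L^\infty\subset L\subset L^1$ containing all $X_\pi$, and $\rho: L\to(-\infty,\infty]$ is monotone, cash-invariant ($\rho(X+c)=\rho(X)-c$) and positively homogeneous ($\rho(\lambda X)=\lambda\rho(X)$, $\lambda\ge0$). The market admits strong $\rho$-arbitrage if for every portfolio $\pi\in\mathbb{R}^d$ there exists $\pi'\in\mathbb{R}^d$ with $\mathbb{E}[X_{\pi'}] > \mathbb{E}[X_\pi]$ and $\rho(X_{\pi'}) < \rho(X_\pi)$. *)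

theory Defs
  imports "HOL-Probability.Probability"
begin

definition ret :: "('d \<Rightarrow> real) \<Rightarrow> ('d \<Rightarrow> 'a \<Rightarrow> real) \<Rightarrow> 'd \<Rightarrow> 'a \<Rightarrow> real" where
  "ret S0 S1 i = (\<lambda>\<omega>. (S1 i \<omega> - S0 i) / S0 i)"

definition excess_ret ::
  "('d::finite \<Rightarrow> real) \<Rightarrow> ('d \<Rightarrow> 'a \<Rightarrow> real) \<Rightarrow> real \<Rightarrow> ('d \<Rightarrow> real) \<Rightarrow> 'a \<Rightarrow> real" where
  "excess_ret S0 S1 r \<pi> = (\<lambda>\<omega>. \<Sum>i\<in>UNIV. \<pi> i * (ret S0 S1 i \<omega> - r))"

definition nonredundant ::
  "'a measure \<Rightarrow> ('d::finite \<Rightarrow> real) \<Rightarrow> ('d \<Rightarrow> 'a \<Rightarrow> real) \<Rightarrow> real \<Rightarrow> bool" where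
  "nonredundant M S0 S1 r \<longleftrightarrow>
     (\<forall>(\<theta>0::real) (\<theta>::'d \<Rightarrow> real).
        \<theta>0 * 1 + (\<Sum>i\<in>UNIV. \<theta> i * S0 i) = 0 \<and>
        (AE \<omega> in M. \<theta>0 * (1 + r) + (\<Sum>i\<in>UNIV. \<theta> i * S1 i \<omega>) = 0)
        \<longrightarrow> \<theta>0 = 0 \<and> (\<forall>i. \<theta> i = 0))"

text \<open>L is a Riesz space (vector sublattice) of random variables with L^\<infinity> \<subseteq> L \<subseteq> L^1.
  Random variables are represented by functions; L^\<infinity> = essentially bounded measurable functions.\<close>
definition riesz_between :: "'a measure \<Rightarrow> ('a \<Rightarrow> real) set \<Rightarrow> bool" where
  "riesz_between M L \<longleftrightarrow>
     (\<forall>X\<in>L. integrable M X) \<and>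
     (\<forall>X. X \<in> borel_measurable M \<and> (\<exists>C. AE \<omega> in M. \<bar>X \<omega>\<bar> \<le> C) \<longrightarrow> X \<in> L) \<and>
     (\<forall>X\<in>L. \<forall>Y\<in>L. (\<lambda>\<omega>. X \<omega> + Y \<omega>) \<in> L) \<and>
     (\<forall>X\<in>L. \<forall>c::real. (\<lambda>\<omega>. c * X \<omega>) \<in> L) \<and>
     (\<forall>X\<in>L. \<forall>Y\<in>L. (\<lambda>\<omega>. max (X \<omega>) (Y \<omega>)) \<in> L)"

definition risk_measure :: "'a measure \<Rightarrow> ('a \<Rightarrow> real) set \<Rightarrow> (('a \<Rightarrow> real) \<Rightarrow> ereal) \<Rightarrow> bool" where
  "risk_measure M L \<rho> \<longleftrightarrow>
     (\<forall>X\<in>L. \<rho> X \<noteq> -\<infinity>) \<and>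
     (\<forall>X\<in>L. \<forall>Y\<in>L. (AE \<omega> in M. X \<omega> \<le> Y \<omega>) \<longrightarrow> \<rho> Y \<le> \<rho> X) \<and>
     (\<forall>X\<in>L. \<forall>c::real. \<rho> (\<lambda>\<omega>. X \<omega> + c) = \<rho> X - ereal c) \<and>
     (\<forall>X\<in>L. \<forall>t::real. t \<ge> 0 \<longrightarrow> \<rho> (\<lambda>\<omega>. t * X \<omega>) = ereal t * \<rho> X)"

definition strong_rho_arbitrage ::
  "'a measure \<Rightarrow> (('a \<Rightarrow> real) \<Rightarrow> ereal) \<Rightarrow> ('d::finite \<Rightarrow> real) \<Rightarrow> ('d \<Rightarrow> 'a \<Rightarrow> real) \<Rightarrow> real \<Rightarrow> bool" where
  "strong_rho_arbitrage M \<rho> S0 S1 r \<longleftrightarrow>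
     (\<forall>\<pi>::'d \<Rightarrow> real. \<exists>\<pi>'::'d \<Rightarrow> real.
        integral\<^sup>L M (excess_ret S0 S1 r \<pi>') > integral\<^sup>L M (excess_ret S0 S1 r \<pi>) \<and>
        \<rho> (excess_ret S0 S1 r \<pi>') < \<rho> (excess_ret S0 S1 r \<pi>))"

definition rho1 ::
  "'a measure \<Rightarrow> (('a \<Rightarrow> real) \<Rightarrow> ereal) \<Rightarrow> ('d::finite \<Rightarrow> real) \<Rightarrow> ('d \<Rightarrow> 'a \<Rightarrow> real) \<Rightarrow> real \<Rightarrow> ereal" where
  "rho1 M \<rho> S0 S1 r =
     Inf {\<rho> (excess_ret S0 S1 r \<pi>) | \<pi>::'d \<Rightarrow> real. integral\<^sup>L M (excess_ret S0 S1 r \<pi>) = 1}"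

end

theory Submission
  imports Defs
begin

text \<open>Both conditions depend only on the positive homogeneity of expected excess return and
  risk along rays of portfolios. A strong arbitrage beats the zero portfolio, which has mean and
  risk 0; rescaling that portfolio to mean 1 gives negative risk. Conversely, a portfolio of
  mean 1 and risk \<open>c < 0\<close>, scaled by \<open>t\<close>, has mean \<open>t\<close> and risk \<open>t c \<rightarrow> -\<infinity>\<close>, so it eventually
  beats any portfolio, whose risk is never \<open>-\<infinity>\<close>.\<close>

locale homogeneous_mean_risk =
  fixes mean :: "'p \<Rightarrow> real" and risk :: "'p \<Rightarrow> ereal" and scale :: "real \<Rightarrow> 'p \<Rightarrow> 'p"
  assumes mean_scale: "mean (scale t p) = t * mean p"
    and risk_scale: "t \<ge> 0 \<Longrightarrow> risk (scale t p) = ereal t * risk p"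
    and risk_not_MInfty: "risk p \<noteq> -\<infinity>"
begin

definition improvable :: bool where
  "improvable \<longleftrightarrow> (\<forall>p. \<exists>q. mean q > mean p \<and> risk q < risk p)"

definition unit_mean_risk :: ereal where
  "unit_mean_risk = Inf {risk p | p. mean p = 1}"

lemma mean_scale_zero: "mean (scale 0 p) = 0"
  by (simp add: mean_scale)

lemma risk_scale_zero: "risk (scale 0 p) = 0"
  by (simp add: risk_scale zero_ereal_def [symmetric])

lemma unit_mean_risk_negative_if_improvable:
  assumes improvable
  shows "unit_mean_risk < 0"
proof -
  obtain q where q: "mean q > 0" "risk q < 0"
    using assms unfolding improvable_def
    by (metis mean_scale_zero risk_scale_zero)
  define t where "t = 1 / mean q"
  have "t > 0" "mean (scale t q) = 1"
    using q(1) by (simp_all add: t_def mean_scale)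
  moreover have "risk (scale t q) < 0"
    using \<open>t > 0\<close> q(2) risk_not_MInfty [of q]
    by (simp add: risk_scale ereal_mult_less_0_iff)
  ultimately show ?thesis
    unfolding unit_mean_risk_def by (blast intro: Inf_lower le_less_trans)
qed

lemma improvable_if_unit_mean_risk_negative:
  assumes "unit_mean_risk < 0"
  shows improvable
  unfolding improvable_def
proof
  fix p
  obtain q where q: "mean q = 1" "risk q < 0"
    using assms unfolding unit_mean_risk_def by (auto simp: Inf_less_iff)
  then obtain c where c: "risk q = ereal c" "c < 0"
    using risk_not_MInfty [of q] by (cases "risk q") auto
  obtain b where b: "ereal b < risk p"
    using ereal_dense2 [of "-\<infinity>" "risk p"] risk_not_MInfty [of p] by auto
  define t where "t = max 0 (max (mean p + 1) (b / c))"
  have "t \<ge> 0" "t > mean p" "t \<ge> b / c"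
    by (auto simp: t_def)
  have "t * c \<le> b"
    using \<open>t \<ge> b / c\<close> \<open>c < 0\<close> by (simp add: neg_divide_le_eq)
  then have "ereal (t * c) < risk p"
    using b by (meson ereal_less_eq(3) le_less_trans)
  then have "risk (scale t q) < risk p"
    using \<open>t \<ge> 0\<close> c(1) by (simp add: risk_scale)
  moreover have "mean (scale t q) > mean p"
    using \<open>t > mean p\<close> q(1) by (simp add: mean_scale)
  ultimately show "\<exists>q. mean q > mean p \<and> risk q < risk p"
    by blast
qed

theorem improvable_iff_unit_mean_risk_negative: "improvable \<longleftrightarrow> unit_mean_risk < 0"
  using improvable_if_unit_mean_risk_negative unit_mean_risk_negative_if_improvable by blast

end

lemma excess_ret_scale:
  "excess_ret S0 S1 r (\<lambda>i. t * \<pi> i) = (\<lambda>\<omega>. t * excess_ret S0 S1 r \<pi> \<omega>)"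
  unfolding excess_ret_def by (simp add: sum_distrib_left mult.assoc)

lemma homogeneous_mean_risk_excess_ret:
  assumes "risk_measure M L \<rho>" and "\<And>\<pi>. excess_ret S0 S1 r \<pi> \<in> L"
  shows "homogeneous_mean_risk (\<lambda>\<pi>. integral\<^sup>L M (excess_ret S0 S1 r \<pi>))
           (\<lambda>\<pi>. \<rho> (excess_ret S0 S1 r \<pi>)) (\<lambda>t \<pi> i. t * \<pi> i)"
  using assms unfolding risk_measure_def
  by unfold_locales (simp_all add: excess_ret_scale)

theorem theorem3p18:
  fixes M :: "'a measure" and r :: real
    and S0 :: "'d::finite \<Rightarrow> real" and S1 :: "'d \<Rightarrow> 'a \<Rightarrow> real"
    and L :: "('a \<Rightarrow> real) set" and \<rho> :: "('a \<Rightarrow> real) \<Rightarrow> ereal"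
  assumes "prob_space M"
    and "r > -1"
    and "\<And>i. S0 i > 0"
    and "\<And>i. S1 i \<in> borel_measurable M"
    and "nonredundant M S0 S1 r"
    and "\<And>i. integrable M (ret S0 S1 i)"
    and "\<exists>i. integral\<^sup>L M (ret S0 S1 i) \<noteq> r"
    and "riesz_between M L"
    and "\<And>\<pi>. excess_ret S0 S1 r \<pi> \<in> L"
    and "risk_measure M L \<rho>"
  shows "strong_rho_arbitrage M \<rho> S0 S1 r \<longleftrightarrow> rho1 M \<rho> S0 S1 r < 0"
proof -
  interpret homogeneous_mean_risk "\<lambda>\<pi>. integral\<^sup>L M (excess_ret S0 S1 r \<pi>)"
      "\<lambda>\<pi>. \<rho> (excess_ret S0 S1 r \<pi>)" "\<lambda>t \<pi> i. t * \<pi> i"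
    by (rule homogeneous_mean_risk_excess_ret [OF assms(10,9)])
  show ?thesis
    using improvable_iff_unit_mean_risk_negative
    unfolding improvable_def unit_mean_risk_def strong_rho_arbitrage_def rho1_def .
qed

end
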